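(* The relation $\le$ on isomorphism classes of codes, defined by $[\mathcal{D}]\le[\mathcal{C}]$ if and only if some finite (possibly empty) sequence of operations takes $\mathcal{C}$ to a code isomorphic to $\mathcal{D}$, is a well-defined partial order on the set of isomorphism classes of codes.
   Context: A code is a subset $\mathcal{C}\subseteq 2^{[n]}$. For $\sigma\subseteq[n]$, $\mathrm{Tk}_{\mathcal{C}}(\sigma)=\{c\in\mathcal{C}\mid\sigma\subseteq c\}$; a trunk in $\mathcal{C}$ is a subset that is empty or of this form (a trunk is itself regarded as a code in $2^{[n]}$). A function $f:\mathcal{C}\to\mathcal{D}$ between codes is a morphism if preimages of trunks in $\mathcal{D}$ are trunks in $\mathcal{C}$; an isomorphism is a morphism with an inverse function that is also a morphism. An operation on a code $\mathcal{C}$ is either replacing $\mathcal{C}$ by its image $f(\mathcal{C})$ under some morphism $f$ with domain $\mathcal{C}$, or replacing $\mathcal{C}$ by one of its trunks. *)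

theory Defs
  imports Main
begin

definition is_code :: "nat set set \<Rightarrow> bool" where
  "is_code C \<longleftrightarrow> (\<exists>n::nat. \<forall>c\<in>C. c \<subseteq> {1..n})"

definition codes :: "nat set set set" where
  "codes = {C. is_code C}"

definition Tk :: "nat set set \<Rightarrow> nat set \<Rightarrow> nat set set" where
  "Tk C \<sigma> = {c \<in> C. \<sigma> \<subseteq> c}"

definition is_trunk :: "nat set set \<Rightarrow> nat set set \<Rightarrow> bool" where
  "is_trunk C T \<longleftrightarrow> T = {} \<or> (\<exists>\<sigma>. T = Tk C \<sigma>)"

definition is_morphism :: "nat set set \<Rightarrow> nat set set \<Rightarrow> (nat set \<Rightarrow> nat set) \<Rightarrow> bool" where
  "is_morphism C D f \<longleftrightarrow>
     (\<forall>c\<in>C. f c \<in> D) \<and> (\<forall>T. is_trunk D T \<longrightarrow> is_trunk C {c \<in> C. f c \<in> T})"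

definition code_iso :: "nat set set \<Rightarrow> nat set set \<Rightarrow> bool" where
  "code_iso C D \<longleftrightarrow> (\<exists>f g. is_morphism C D f \<and> is_morphism D C g \<and>
       (\<forall>c\<in>C. g (f c) = c) \<and> (\<forall>d\<in>D. f (g d) = d))"

definition op_step :: "nat set set \<Rightarrow> nat set set \<Rightarrow> bool" where
  "op_step C C' \<longleftrightarrow> (\<exists>D f. is_code D \<and> is_morphism C D f \<and> C' = f ` C) \<or> is_trunk C C'"

definition code_le :: "nat set set \<Rightarrow> nat set set \<Rightarrow> bool" where
  "code_le D C \<longleftrightarrow> (\<exists>C'. op_step\<^sup>*\<^sup>* C C' \<and> code_iso C' D)"

definition iso_rel :: "(nat set set \<times> nat set set) set" where
  "iso_rel = {(C, D). is_code C \<and> is_code D \<and> code_iso C D}"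

definition class_le :: "(nat set set set \<times> nat set set set) set" where
  "class_le = {(X, Y). X \<in> codes // iso_rel \<and> Y \<in> codes // iso_rel \<and>
                        (\<exists>D\<in>X. \<exists>C\<in>Y. code_le D C)}"

end

theory Submission
  imports Defs
begin

text \<open>Isomorphic codes simulate each other's operations: an image under a morphism is
  reached by composing with the isomorphism, and a trunk is pulled back along it. Hence
  \<open>\<le>\<close> does not depend on representatives, and it is transitive because sequences of
  operations concatenate. For antisymmetry, every operation weakly decreases both the number
  of codewords and the number of trunks; an operation preserving both numbers is a bijection
  whose preimage map is a bijection on trunks, i.e. an isomorphism. So if each of two codes
  is below the other, the operations leading from one to the other are all isomorphisms.\<close>

lemma is_morphismI:
  "(\<And>c. c \<in> C \<Longrightarrow> f c \<in> D) \<Longrightarrow> (\<And>T. is_trunk D T \<Longrightarrow> is_trunk C {c \<in> C. f c \<in> T})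
    \<Longrightarrow> is_morphism C D f"
  unfolding is_morphism_def by blast

lemma morphism_mapsto: "is_morphism C D f \<Longrightarrow> c \<in> C \<Longrightarrow> f c \<in> D"
  unfolding is_morphism_def by blast

lemma morphism_trunk_preimage:
  "is_morphism C D f \<Longrightarrow> is_trunk D T \<Longrightarrow> is_trunk C {c \<in> C. f c \<in> T}"
  unfolding is_morphism_def by blast

lemma trunk_subset: "is_trunk C T \<Longrightarrow> T \<subseteq> C"
  by (auto simp: is_trunk_def Tk_def)

lemma trunk_Tk: "is_trunk C (Tk C \<sigma>)"
  by (auto simp: is_trunk_def)

lemma trunk_Int: "is_trunk C S \<Longrightarrow> is_trunk C T \<Longrightarrow> is_trunk C (S \<inter> T)"
proof (cases "S = {} \<or> T = {}")
  case False
  assume "is_trunk C S" "is_trunk C T"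
  with False obtain s t where "S = Tk C s" "T = Tk C t" by (auto simp: is_trunk_def)
  then have "S \<inter> T = Tk C (s \<union> t)" by (auto simp: Tk_def)
  then show ?thesis by (simp add: trunk_Tk)
qed (auto simp: is_trunk_def)

lemma trunk_of_subset: "is_trunk A S \<Longrightarrow> S \<subseteq> Y \<Longrightarrow> Y \<subseteq> A \<Longrightarrow> is_trunk Y S"
  unfolding is_trunk_def Tk_def by blast

lemma trunk_of_trunk: "is_trunk A X \<Longrightarrow> is_trunk X T \<Longrightarrow> is_trunk A T"
proof -
  assume X: "is_trunk A X" and T: "is_trunk X T"
  consider "T = {}" | t where "T = Tk X t" using T by (auto simp: is_trunk_def)
  then show ?thesis
  proof cases
    case (2 t)
    with trunk_subset[OF X] have "T = X \<inter> Tk A t" by (auto simp: Tk_def)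
    then show ?thesis using trunk_Int[OF X trunk_Tk] by simp
  qed (simp add: is_trunk_def)
qed

lemma morphism_id: "is_morphism C C id"
proof (rule is_morphismI)
  fix T assume "is_trunk C T"
  moreover from trunk_subset[OF this] have "{c \<in> C. id c \<in> T} = T" by auto
  ultimately show "is_trunk C {c \<in> C. id c \<in> T}" by simp
qed simp

lemma morphism_comp:
  assumes g: "is_morphism A B g" and f: "is_morphism B D f"
  shows "is_morphism A D (f \<circ> g)"
proof (rule is_morphismI)
  fix T assume "is_trunk D T"
  then have "is_trunk A {a \<in> A. g a \<in> {b \<in> B. f b \<in> T}}"
    by (intro morphism_trunk_preimage[OF g] morphism_trunk_preimage[OF f])
  moreover have "{a \<in> A. g a \<in> {b \<in> B. f b \<in> T}} = {a \<in> A. (f \<circ> g) a \<in> T}"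
    using morphism_mapsto[OF g] by auto
  ultimately show "is_trunk A {a \<in> A. (f \<circ> g) a \<in> T}" by simp
qed (simp add: morphism_mapsto[OF g] morphism_mapsto[OF f])

text \<open>Only the trunks of \<open>D\<close> of the form \<open>Tk D \<sigma>\<close> matter, and on the image
  \<open>Tk (f ` C) \<sigma>\<close> has the same preimage as \<open>Tk D \<sigma>\<close>.\<close>
lemma morphism_onto_image:
  assumes f: "is_morphism C D f"
  shows "is_morphism C (f ` C) f"
proof (rule is_morphismI)
  fix T assume T: "is_trunk (f ` C) T"
  consider "T = {}" | \<sigma> where "T = Tk (f ` C) \<sigma>" using T by (auto simp: is_trunk_def)
  then show "is_trunk C {c \<in> C. f c \<in> T}"
  proof cases
    case (2 \<sigma>)
    then have "{c \<in> C. f c \<in> T} = {c \<in> C. f c \<in> Tk D \<sigma>}"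
      using morphism_mapsto[OF f] by (auto simp: Tk_def)
    then show ?thesis using morphism_trunk_preimage[OF f trunk_Tk] by simp
  qed (simp add: is_trunk_def)
qed simp

lemma morphism_restrict:
  assumes f: "is_morphism A B f" and "is_trunk A A'" "is_trunk B B'"
    and maps: "\<And>a. a \<in> A' \<Longrightarrow> f a \<in> B'"
  shows "is_morphism A' B' f"
proof (rule is_morphismI)
  fix T assume "is_trunk B' T"
  then have "is_trunk A (A' \<inter> {a \<in> A. f a \<in> T})"
    using assms(2,3) by (blast intro: trunk_Int morphism_trunk_preimage[OF f] trunk_of_trunk)
  moreover have "A' \<inter> {a \<in> A. f a \<in> T} = {a \<in> A'. f a \<in> T}"
    using trunk_subset[OF assms(2)] by blast
  ultimately show "is_trunk A' {a \<in> A'. f a \<in> T}"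
    using trunk_of_subset[OF _ _ trunk_subset[OF assms(2)]] by auto
qed (rule maps)

lemma code_isoI:
  "is_morphism C D f \<Longrightarrow> is_morphism D C g \<Longrightarrow> (\<And>c. c \<in> C \<Longrightarrow> g (f c) = c)
    \<Longrightarrow> (\<And>d. d \<in> D \<Longrightarrow> f (g d) = d) \<Longrightarrow> code_iso C D"
  unfolding code_iso_def by blast

lemma code_isoE:
  assumes "code_iso C D"
  obtains f g where "is_morphism C D f" "is_morphism D C g"
    "\<And>c. c \<in> C \<Longrightarrow> g (f c) = c" "\<And>d. d \<in> D \<Longrightarrow> f (g d) = d"
  using assms that unfolding code_iso_def by metis

lemma code_iso_refl: "code_iso C C"
  by (rule code_isoI[OF morphism_id morphism_id]) simp_all

lemma code_iso_sym: "code_iso C D \<Longrightarrow> code_iso D C"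
  by (erule code_isoE) (rule code_isoI, assumption+)

lemma code_iso_trans:
  assumes "code_iso A B" "code_iso B C"
  shows "code_iso A C"
proof -
  obtain f g where fg: "is_morphism A B f" "is_morphism B A g"
    "\<And>a. a \<in> A \<Longrightarrow> g (f a) = a" "\<And>b. b \<in> B \<Longrightarrow> f (g b) = b"
    using assms(1) by (elim code_isoE) (rule that)
  obtain f' g' where fg': "is_morphism B C f'" "is_morphism C B g'"
    "\<And>b. b \<in> B \<Longrightarrow> g' (f' b) = b" "\<And>c. c \<in> C \<Longrightarrow> f' (g' c) = c"
    using assms(2) by (elim code_isoE) (rule that)
  show ?thesis
    by (rule code_isoI[OF morphism_comp[OF fg(1) fg'(1)] morphism_comp[OF fg'(2) fg(2)]])
      (simp_all add: fg fg' morphism_mapsto[OF fg(1)] morphism_mapsto[OF fg'(2)])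
qed

lemma morphism_right_inverse_image:
  "is_morphism C D f \<Longrightarrow> is_morphism D C g \<Longrightarrow> (\<And>d. d \<in> D \<Longrightarrow> f (g d) = d) \<Longrightarrow> f ` C = D"
proof
  assume "is_morphism C D f" "is_morphism D C g" and fg: "\<And>d. d \<in> D \<Longrightarrow> f (g d) = d"
  then show "f ` C \<subseteq> D" using morphism_mapsto by blast
  show "D \<subseteq> f ` C"
  proof
    fix d assume "d \<in> D"
    then show "d \<in> f ` C" using fg morphism_mapsto[OF \<open>is_morphism D C g\<close>] by (metis image_eqI)
  qed
qed

lemma op_step_iso_simulation:
  assumes "code_iso A B" "op_step B X"
  shows "\<exists>X'. op_step A X' \<and> code_iso X' X"
proof -
  obtain f h where fh: "is_morphism A B f" "is_morphism B A h"
    "\<And>a. a \<in> A \<Longrightarrow> h (f a) = a" "\<And>b. b \<in> B \<Longrightarrow> f (h b) = b"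
    using assms(1) by (elim code_isoE) (rule that)
  consider D g where "is_code D" "is_morphism B D g" "X = g ` B" | "is_trunk B X"
    using assms(2) unfolding op_step_def by blast
  then show ?thesis
  proof cases
    case (1 D g)
    have "X = (g \<circ> f) ` A"
      using 1(3) morphism_right_inverse_image[OF fh(1,2,4)] by (metis image_comp)
    then have "op_step A X"
      using 1(1) morphism_comp[OF fh(1) 1(2)] unfolding op_step_def by blast
    then show ?thesis using code_iso_refl by blast
  next
    case 2
    define X' where "X' = {a \<in> A. f a \<in> X}"
    have X': "is_trunk A X'"
      unfolding X'_def by (rule morphism_trunk_preimage[OF fh(1) 2])
    have h_maps: "h b \<in> X'" if "b \<in> X" for b
      using that trunk_subset[OF 2] fh(4) morphism_mapsto[OF fh(2)] by (auto simp: X'_def)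
    have "code_iso X' X"
      by (rule code_isoI[OF morphism_restrict[OF fh(1) X' 2] morphism_restrict[OF fh(2) 2 X' h_maps]])
        (use fh(3,4) trunk_subset[OF 2] in \<open>auto simp: X'_def\<close>)
    moreover have "op_step A X'" using X' by (simp add: op_step_def)
    ultimately show ?thesis by blast
  qed
qed

lemma op_steps_iso_simulation:
  assumes "op_step\<^sup>*\<^sup>* B X" "code_iso A B"
  shows "\<exists>X'. op_step\<^sup>*\<^sup>* A X' \<and> code_iso X' X"
  using assms(1)
proof (induction rule: rtranclp_induct)
  case (step Y Z)
  then obtain Y' where "op_step\<^sup>*\<^sup>* A Y'" "code_iso Y' Y" by blast
  with op_step_iso_simulation[OF _ step(2)] show ?case
    by (meson rtranclp.rtrancl_into_rtrancl)
qed (use assms(2) in blast)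

definition trunks :: "nat set set \<Rightarrow> nat set set set" where
  "trunks C = {T. is_trunk C T}"

lemma finite_trunks: "finite C \<Longrightarrow> finite (trunks C)"
  unfolding trunks_def by (rule finite_subset[of _ "Pow C"]) (auto dest: trunk_subset)

lemma trunks_of_trunk_subset: "is_trunk C X \<Longrightarrow> trunks X \<subseteq> trunks C"
  unfolding trunks_def by (blast intro: trunk_of_trunk)

lemma inj_on_trunk_preimage:
  assumes "D \<subseteq> f ` C"
  shows "inj_on (\<lambda>T. {c \<in> C. f c \<in> T}) (trunks D)"
proof (rule inj_onI)
  fix S T assume ST: "S \<in> trunks D" "T \<in> trunks D"
    and eq: "{c \<in> C. f c \<in> S} = {c \<in> C. f c \<in> T}"
  from ST have "S \<subseteq> D" "T \<subseteq> D" by (auto simp: trunks_def dest: trunk_subset)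
  with assms have "S = f ` {c \<in> C. f c \<in> S}" "T = f ` {c \<in> C. f c \<in> T}" by blast+
  with eq show "S = T" by simp
qed

lemma trunk_preimage_image_subset:
  "is_morphism C D f \<Longrightarrow> (\<lambda>T. {c \<in> C. f c \<in> T}) ` trunks D \<subseteq> trunks C"
  unfolding trunks_def by (blast intro: morphism_trunk_preimage)

lemma card_trunks_le_surjective_morphism:
  assumes "is_morphism C D f" "D \<subseteq> f ` C" "finite C"
  shows "card (trunks D) \<le> card (trunks C)"
  using card_inj_on_le[OF inj_on_trunk_preimage[OF assms(2)]
      trunk_preimage_image_subset[OF assms(1)] finite_trunks[OF assms(3)]] .

lemma code_iso_if_bij_trunk_preimage:
  assumes f: "is_morphism C D f" and bij: "bij_betw f C D"
    and onto: "(\<lambda>T. {c \<in> C. f c \<in> T}) ` trunks D = trunks C"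
  shows "code_iso C D"
proof -
  define h where "h = inv_into C f"
  have h_maps: "h d \<in> C" and f_h: "f (h d) = d" if "d \<in> D" for d
    using that bij by (auto simp: h_def bij_betw_def inv_into_into f_inv_into_f)
  have h_f: "h (f c) = c" if "c \<in> C" for c
    using that bij by (simp add: h_def bij_betw_def)
  have "is_morphism D C h"
  proof (rule is_morphismI)
    fix S assume "is_trunk C S"
    then obtain T where T: "is_trunk D T" and S: "S = {c \<in> C. f c \<in> T}"
      using onto unfolding trunks_def by blast
    have "{d \<in> D. h d \<in> S} = T"
      using trunk_subset[OF T] h_maps f_h by (auto simp: S)
    with T show "is_trunk D {d \<in> D. h d \<in> S}" by simp
  qed (rule h_maps)
  then show ?thesis using code_isoI[OF f] h_f f_h by blast
qed

lemma code_iso_counts: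
  assumes "code_iso C D" "finite C"
  shows "finite D \<and> card D = card C \<and> card (trunks D) = card (trunks C)"
proof -
  obtain f h where fh: "is_morphism C D f" "is_morphism D C h"
    "\<And>c. c \<in> C \<Longrightarrow> h (f c) = c" "\<And>d. d \<in> D \<Longrightarrow> f (h d) = d"
    using assms(1) by (elim code_isoE) (rule that)
  have D: "f ` C = D" and C: "h ` D = C"
    using morphism_right_inverse_image fh by blast+
  have "inj_on f C" by (metis fh(3) inj_onI)
  with D have "card D = card C" by (metis card_image)
  moreover have "finite D" using D assms(2) by blast
  moreover have "card (trunks D) \<le> card (trunks C)"
    using card_trunks_le_surjective_morphism[OF fh(1)] D assms(2) by blast
  moreover have "card (trunks C) \<le> card (trunks D)"
    using card_trunks_le_surjective_morphism[OF fh(2)] C \<open>finite D\<close> by blast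
  ultimately show ?thesis by simp
qed

lemma op_step_counts:
  assumes "op_step C X" "finite C"
  shows "finite X \<and> card X \<le> card C \<and> card (trunks X) \<le> card (trunks C)"
proof (cases "is_trunk C X")
  case True
  then have "X \<subseteq> C" "trunks X \<subseteq> trunks C"
    by (simp_all add: trunk_subset trunks_of_trunk_subset)
  with assms(2) show ?thesis
    by (simp add: card_mono finite_subset finite_trunks)
next
  case False
  then obtain D f where f: "is_morphism C D f" and X: "X = f ` C"
    using assms(1) unfolding op_step_def by blast
  have "card (trunks X) \<le> card (trunks C)"
    using card_trunks_le_surjective_morphism[OF morphism_onto_image[OF f] _ assms(2)] X by blast
  with X assms(2) show ?thesis by (simp add: card_image_le)
qed

lemma op_step_iso_if_counts_eq:
  assumes "op_step C X" "finite C"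
    and card_eq: "card X = card C" and trunks_eq: "card (trunks X) = card (trunks C)"
  shows "code_iso C X"
proof (cases "is_trunk C X")
  case True
  with assms(2) card_eq have "X = C" using card_subset_eq trunk_subset by blast
  then show ?thesis by (simp add: code_iso_refl)
next
  case False
  then obtain D f where "is_morphism C D f" and X: "X = f ` C"
    using assms(1) unfolding op_step_def by blast
  then have f: "is_morphism C X f" by (simp add: morphism_onto_image)
  have "bij_betw f C X"
    unfolding bij_betw_def using X card_eq assms(2) eq_card_imp_inj_on by blast
  moreover have "(\<lambda>T. {c \<in> C. f c \<in> T}) ` trunks X = trunks C"
  proof (rule card_subset_eq[OF finite_trunks[OF assms(2)] trunk_preimage_image_subset[OF f]])
    show "card ((\<lambda>T. {c \<in> C. f c \<in> T}) ` trunks X) = card (trunks C)"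
      using card_image[OF inj_on_trunk_preimage[of X f C]] X trunks_eq by simp
  qed
  ultimately show ?thesis by (rule code_iso_if_bij_trunk_preimage[OF f])
qed

lemma op_steps_counts:
  assumes "op_step\<^sup>*\<^sup>* C X" "finite C"
  shows "finite X \<and> card X \<le> card C \<and> card (trunks X) \<le> card (trunks C)"
  using assms(1)
proof (induction rule: rtranclp_induct)
  case (step Y Z)
  then show ?case using op_step_counts[OF step(2)] by (meson order.trans)
qed (use assms(2) in simp)

lemma op_steps_iso_if_counts_eq:
  assumes "op_step\<^sup>*\<^sup>* C X" "finite C"
  shows "card X = card C \<Longrightarrow> card (trunks X) = card (trunks C) \<Longrightarrow> code_iso C X"
  using assms(1)
proof (induction rule: rtranclp_induct)
  case (step Y Z)
  have Y: "finite Y" "card Y \<le> card C" "card (trunks Y) \<le> card (trunks C)"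
    using op_steps_counts[OF step(1) assms(2)] by blast+
  have "card Z \<le> card Y" "card (trunks Z) \<le> card (trunks Y)"
    using op_step_counts[OF step(2) Y(1)] by blast+
  with Y step.prems have "card Y = card C" "card (trunks Y) = card (trunks C)"
    "card Z = card Y" "card (trunks Z) = card (trunks Y)"
    by linarith+
  then have "code_iso C Y" by (intro step.IH)
  moreover have "code_iso Y Z"
    using op_step_iso_if_counts_eq[OF step(2) Y(1)] \<open>card Z = card Y\<close>
      \<open>card (trunks Z) = card (trunks Y)\<close> by blast
  ultimately show ?case by (rule code_iso_trans)
qed (simp add: code_iso_refl)

lemma code_le_refl: "code_le C C"
  unfolding code_le_def using code_iso_refl by blast

lemma code_le_iso_invariant:
  assumes "code_iso C C'" "code_iso D D'" "code_le D C"
  shows "code_le D' C'"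
proof -
  obtain C1 where C1: "op_step\<^sup>*\<^sup>* C C1" "code_iso C1 D"
    using assms(3) unfolding code_le_def by blast
  obtain X where "op_step\<^sup>*\<^sup>* C' X" "code_iso X C1"
    using op_steps_iso_simulation[OF C1(1) code_iso_sym[OF assms(1)]] by blast
  with C1(2) assms(2) show ?thesis
    unfolding code_le_def by (blast intro: code_iso_trans)
qed

lemma code_le_trans:
  assumes "code_le D C" "code_le C E"
  shows "code_le D E"
proof -
  obtain E1 where E1: "op_step\<^sup>*\<^sup>* E E1" "code_iso E1 C"
    using assms(2) unfolding code_le_def by blast
  obtain C1 where C1: "op_step\<^sup>*\<^sup>* C C1" "code_iso C1 D"
    using assms(1) unfolding code_le_def by blast
  obtain X where "op_step\<^sup>*\<^sup>* E1 X" "code_iso X C1"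
    using op_steps_iso_simulation[OF C1(1) E1(2)] by blast
  with E1(1) C1(2) show ?thesis
    unfolding code_le_def by (blast intro: code_iso_trans rtranclp_trans)
qed

lemma code_le_antisym:
  assumes "code_le D C" "code_le C D" "finite C"
  shows "code_iso C D"
proof -
  obtain C1 where C1: "op_step\<^sup>*\<^sup>* C C1" "code_iso C1 D"
    using assms(1) unfolding code_le_def by blast
  obtain D1 where D1: "op_step\<^sup>*\<^sup>* D D1" "code_iso D1 C"
    using assms(2) unfolding code_le_def by blast
  have C1_counts: "finite C1" "card C1 \<le> card C" "card (trunks C1) \<le> card (trunks C)"
    using op_steps_counts[OF C1(1) assms(3)] by blast+
  have D_counts: "finite D" "card D = card C1" "card (trunks D) = card (trunks C1)"
    using code_iso_counts[OF C1(2) C1_counts(1)] by blast+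
  have "card D1 \<le> card D" "card (trunks D1) \<le> card (trunks D)"
    using op_steps_counts[OF D1(1) D_counts(1)] by blast+
  moreover have "card C = card D1" "card (trunks C) = card (trunks D1)"
    using code_iso_counts[OF D1(2)] op_steps_counts[OF D1(1) D_counts(1)] by blast+
  ultimately have "code_iso C C1"
    using op_steps_iso_if_counts_eq[OF C1(1) assms(3)] C1_counts D_counts by simp
  from this C1(2) show ?thesis by (rule code_iso_trans)
qed

lemma finite_code: "is_code C \<Longrightarrow> finite C"
  unfolding is_code_def by (metis Pow_iff finite_Pow_iff finite_atLeastAtMost finite_subset subsetI)

lemma equiv_iso_rel: "equiv codes iso_rel"
proof (rule equivI)
  show "refl_on codes iso_rel"
    by (auto simp: refl_on_def iso_rel_def codes_def code_iso_refl)
  show "sym iso_rel"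
    by (auto simp: sym_def iso_rel_def intro: code_iso_sym)
  show "trans iso_rel"
    unfolding trans_def iso_rel_def by (blast intro: code_iso_trans)
qed (auto simp: iso_rel_def codes_def)

lemma iso_class_member:
  assumes "X \<in> codes // iso_rel" "C \<in> X"
  shows "is_code C"
  using in_quotient_imp_subset[OF equiv_iso_rel assms(1)] assms(2) by (auto simp: codes_def)

lemma iso_class_members_iso:
  assumes "X \<in> codes // iso_rel" "C \<in> X" "D \<in> X"
  shows "code_iso C D"
  using in_quotient_imp_in_rel[OF equiv_iso_rel assms(1)] assms(2,3) by (simp add: iso_rel_def)

lemma class_le_iff:
  assumes "X \<in> codes // iso_rel" "Y \<in> codes // iso_rel" "D \<in> X" "C \<in> Y"
  shows "(X, Y) \<in> class_le \<longleftrightarrow> code_le D C"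
proof
  assume "(X, Y) \<in> class_le"
  then obtain D' C' where "D' \<in> X" "C' \<in> Y" "code_le D' C'"
    unfolding class_le_def by blast
  then show "code_le D C"
    using code_le_iso_invariant iso_class_members_iso assms by blast
qed (use assms in \<open>auto simp: class_le_def\<close>)

lemma iso_class_nonempty: "X \<in> codes // iso_rel \<Longrightarrow> \<exists>C. C \<in> X"
  by (metis equiv_class_self equiv_iso_rel quotientE)

lemma refl_on_class_le: "refl_on (codes // iso_rel) class_le"
  unfolding refl_on_def using iso_class_nonempty class_le_iff code_le_refl by blast

lemma trans_class_le: "trans class_le"
proof (rule transI)
  fix X Y Z assume XY: "(X, Y) \<in> class_le" and YZ: "(Y, Z) \<in> class_le"
  then have cls: "X \<in> codes // iso_rel" "Y \<in> codes // iso_rel" "Z \<in> codes // iso_rel"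
    unfolding class_le_def by blast+
  then obtain D C E where "D \<in> X" "C \<in> Y" "E \<in> Z" using iso_class_nonempty by meson
  with cls XY YZ show "(X, Z) \<in> class_le"
    using class_le_iff code_le_trans by meson
qed

lemma antisym_class_le: "antisym class_le"
proof (rule antisymI)
  fix X Y assume XY: "(X, Y) \<in> class_le" and YX: "(Y, X) \<in> class_le"
  then have cls: "X \<in> codes // iso_rel" "Y \<in> codes // iso_rel"
    unfolding class_le_def by blast+
  then obtain D C where DC: "D \<in> X" "C \<in> Y" using iso_class_nonempty by meson
  with cls XY YX have "code_le D C" "code_le C D"
    using class_le_iff by blast+
  moreover have "is_code C" "is_code D" using cls DC iso_class_member by blast+
  ultimately have "(C, D) \<in> iso_rel"
    by (simp add: iso_rel_def code_le_antisym finite_code)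
  with cls DC show "X = Y" using quotient_eqI[OF equiv_iso_rel] by blast
qed

theorem proposition5p1:
  shows "equiv codes iso_rel
    \<and> (\<forall>C C' D D'. is_code C \<and> is_code C' \<and> is_code D \<and> is_code D' \<and>
          code_iso C C' \<and> code_iso D D' \<longrightarrow> (code_le D C \<longleftrightarrow> code_le D' C'))
    \<and> partial_order_on (codes // iso_rel) class_le"
proof (intro conjI allI impI)
  fix C C' D D' assume "is_code C \<and> is_code C' \<and> is_code D \<and> is_code D' \<and>
    code_iso C C' \<and> code_iso D D'"
  then have "code_iso C C'" "code_iso D D'" by simp_all
  then show "code_le D C \<longleftrightarrow> code_le D' C'"
    using code_le_iso_invariant code_iso_sym by blast
next
  show "partial_order_on (codes // iso_rel) class_le"
    unfolding partial_order_on_def preorder_on_def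
    using refl_on_class_le trans_class_le antisym_class_le by (auto simp: class_le_def)
qed (rule equiv_iso_rel)

end
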